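(* Let $c>2$ be a constant. Consider random directed graphs $\mathcal{G}_{n,p}$ on $n$ vertices in which each ordered pair $(u,v)$ of distinct vertices is an edge independently with probability $p$, where $p \ge \frac{c\log n}{n}$, together with an arbitrary partition $(V_1,V_P)$ of the vertices into player-1 and probabilistic vertices and an arbitrary nonempty target (B\"uchi) set $B$. Then the expected number of iterations of the classical algorithm for almost-sure winning in MDPs with B\"uchi objective $B$ is $O(1)$ (bounded by a constant independent of $n$ and $p$), and the average case running time of the algorithm is linear in the size of the graph.
   Context: $\log$ denotes the natural logarithm. For $U \subseteq V$ in a graph $G$ with vertex partition $(V_1,V_P)$, the random attractor $\mathrm{Attr}_P(U)$ is $\bigcup_{i\ge 0} X_i$, where $X_0=U$ and $X_{i+1}= X_i \cup \{v\in V_P : E(v)\cap X_i \neq\emptyset\} \cup \{v \in V_1 : E(v)\subseteq X_i\}$, with $E(v)$ the set of out-neighbours of $v$. The classical algorithm for B\"uchi objective $B$ works in iterations: starting from $G^1=G$ with vertex set $V^1$, in iteration $i$ it computes the set $Z^i$ of vertices of $G^i$ with a directed path in $G^i$ to a vertex of $B\cap V^i$, sets $U^i=V^i\setminus Z^i$; if $U^i=\emptyset$ it stops and outputs $Z^i$, otherwise it removes $\mathrm{Attr}_P(U^i)$ (computed in $G^i$) from $G^i$ to get $G^{i+1}$. Each iteration takes time linear in the size of the current graph, and there are at most $n$ iterations. *)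

theory Defs
  imports "HOL-Probability.Probability"
begin

text \<open>Graphs: vertex set V :: nat set and edge relation E :: (nat * nat) set.
  Vertex partition: V1 is the set of player-1 vertices, all other vertices are probabilistic (V_P).\<close>

definition out_edges :: "(nat \<times> nat) set \<Rightarrow> nat \<Rightarrow> nat set" where
  "out_edges E v = {w. (v, w) \<in> E}"

definition reach_B :: "nat set \<Rightarrow> (nat \<times> nat) set \<Rightarrow> nat set \<Rightarrow> nat set" where
  "reach_B V E B = {v \<in> V. \<exists>w \<in> B \<inter> V. (v, w) \<in> (E \<inter> (V \<times> V))\<^sup>*}"

definition attr_P :: "nat set \<Rightarrow> (nat \<times> nat) set \<Rightarrow> nat set \<Rightarrow> nat set \<Rightarrow> nat set" where
  "attr_P V E V1 U = lfp (\<lambda>X. U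
      \<union> {v \<in> V. v \<notin> V1 \<and> out_edges (E \<inter> (V \<times> V)) v \<inter> X \<noteq> {}}
      \<union> {v \<in> V. v \<in> V1 \<and> out_edges (E \<inter> (V \<times> V)) v \<subseteq> X})"

definition U_set :: "nat set \<Rightarrow> (nat \<times> nat) set \<Rightarrow> nat set \<Rightarrow> nat set" where
  "U_set V E B = V - reach_B V E B"

definition buchi_step :: "nat set \<Rightarrow> nat set \<Rightarrow> nat set \<times> (nat \<times> nat) set \<Rightarrow> nat set \<times> (nat \<times> nat) set" where
  "buchi_step V1 B G = (let V = fst G; E = snd G; U = U_set V E B in
     if U = {} then G
     else (let V' = V - attr_P V E V1 U in (V', E \<inter> (V' \<times> V'))))"

text \<open>G^(k+1), starting from G^1 = G.\<close>
definition buchi_graph :: "nat set \<Rightarrow> nat set \<Rightarrow> nat set \<Rightarrow> (nat \<times> nat) set \<Rightarrow> nat \<Rightarrow> nat set \<times> (nat \<times> nat) set" where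
  "buchi_graph V1 B V E k = (buchi_step V1 B ^^ k) (V, E)"

text \<open>Number of iterations: the index i of the first iteration with U^i = {}.\<close>
definition buchi_iterations :: "nat set \<Rightarrow> nat set \<Rightarrow> nat set \<Rightarrow> (nat \<times> nat) set \<Rightarrow> nat" where
  "buchi_iterations V1 B V E =
     Suc (LEAST k. U_set (fst (buchi_graph V1 B V E k)) (snd (buchi_graph V1 B V E k)) B = {})"

definition buchi_time :: "nat set \<Rightarrow> nat set \<Rightarrow> nat set \<Rightarrow> (nat \<times> nat) set \<Rightarrow> nat" where
  "buchi_time V1 B V E =
     (\<Sum>k < buchi_iterations V1 B V E.
        card (fst (buchi_graph V1 B V E k)) + card (snd (buchi_graph V1 B V E k)))"

definition offdiag :: "nat \<Rightarrow> (nat \<times> nat) set" where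
  "offdiag n = {(u, v). u < n \<and> v < n \<and> u \<noteq> v}"

definition random_digraph :: "nat \<Rightarrow> real \<Rightarrow> (nat \<times> nat) set pmf" where
  "random_digraph n p =
     map_pmf (\<lambda>f. {e \<in> offdiag n. f e}) (Pi_pmf (offdiag n) False (\<lambda>_. bernoulli_pmf p))"

end

theory Submission
  imports Defs
begin

text \<open>Call S an empty cut if S is a proper nonempty set of vertices with no edge leaving it.
  Without an empty cut every vertex reaches B, so the algorithm stops in its first iteration, in
  time n + |E|; otherwise it still needs at most n + 1 iterations of cost at most n + |E| each.
  A given cut of k(n - k) potential edges is empty with probability (1 - p)^(k(n - k)), and
  conditioning on it lowers the expected number of edges, so both expectations are at most
  1 + n Q times the trivial ones, where Q = expected_empty_cuts n p is the sum over 0 < k < n of (n choose k) (1 - p)^(k(n - k)).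
  For p \<ge> c ln n / n with c > 2 the k-th term of n Q is at most n^(-(c - 2) min(k, n - k) / 4)
  for large n, so n Q is bounded.\<close>

definition edge_cut :: "nat set \<Rightarrow> nat set \<Rightarrow> (nat \<times> nat) set" where
  "edge_cut V S = S \<times> (V - S)"

definition proper_parts :: "nat set \<Rightarrow> nat set set" where
  "proper_parts V = {S. S \<subseteq> V \<and> S \<noteq> {} \<and> S \<noteq> V}"

definition has_empty_cut :: "nat set \<Rightarrow> (nat \<times> nat) set \<Rightarrow> bool" where
  "has_empty_cut V E \<longleftrightarrow> (\<exists>S \<in> proper_parts V. edge_cut V S \<inter> E = {})"

lemma buchi_graph_0 [simp]: "buchi_graph V1 B V E 0 = (V, E)"
  by (simp add: buchi_graph_def)

lemma buchi_graph_Suc: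
  "buchi_graph V1 B V E (Suc k) = buchi_step V1 B (buchi_graph V1 B V E k)"
  by (simp add: buchi_graph_def)

lemma buchi_graph_subset:
  "fst (buchi_graph V1 B V E k) \<subseteq> V" "snd (buchi_graph V1 B V E k) \<subseteq> E"
  by (induction k) (auto simp: buchi_graph_Suc buchi_step_def Let_def)

lemma subset_attr_P: "U \<subseteq> attr_P V E V1 U"
  unfolding attr_P_def by (rule lfp_greatest) auto

lemma card_buchi_step_less:
  assumes "finite (fst G)" "U_set (fst G) (snd G) B \<noteq> {}"
  shows "card (fst (buchi_step V1 B G)) < card (fst G)"
proof -
  let ?U = "U_set (fst G) (snd G) B"
  have "fst (buchi_step V1 B G) = fst G - attr_P (fst G) (snd G) V1 ?U"
    using assms(2) by (simp add: buchi_step_def Let_def)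
  also have "\<dots> \<subset> fst G"
  proof -
    have "?U \<subseteq> fst G" by (auto simp: U_set_def)
    then show ?thesis using subset_attr_P[of ?U] assms(2) by blast
  qed
  finally show ?thesis
    using assms(1) psubset_card_mono by blast
qed

lemma card_buchi_graph_le:
  assumes "finite V"
    and "\<forall>j<k. U_set (fst (buchi_graph V1 B V E j)) (snd (buchi_graph V1 B V E j)) B \<noteq> {}"
  shows "card (fst (buchi_graph V1 B V E k)) + k \<le> card V"
  using assms(2)
proof (induction k)
  case 0
  then show ?case by simp
next
  case (Suc k)
  have "finite (fst (buchi_graph V1 B V E k))"
    using buchi_graph_subset(1) assms(1) by (rule finite_subset)
  then have "card (fst (buchi_graph V1 B V E (Suc k))) < card (fst (buchi_graph V1 B V E k))"
    unfolding buchi_graph_Suc by (rule card_buchi_step_less) (use Suc.prems in auto)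
  with Suc show ?case by auto
qed

lemma buchi_iterations_le:
  assumes "finite V"
  shows "buchi_iterations V1 B V E \<le> Suc (card V)"
proof -
  let ?stop = "\<lambda>k. U_set (fst (buchi_graph V1 B V E k)) (snd (buchi_graph V1 B V E k)) B = {}"
  have "\<exists>k \<le> card V. ?stop k"
  proof (cases "\<exists>j < card V. ?stop j")
    case False
    then have "card (fst (buchi_graph V1 B V E (card V))) = 0"
      using card_buchi_graph_le[OF assms, of "card V"] by simp
    then have "fst (buchi_graph V1 B V E (card V)) = {}"
      using buchi_graph_subset(1) assms by (metis card_0_eq finite_subset)
    then show ?thesis by (auto simp: U_set_def)
  qed (blast intro: less_imp_le)
  then obtain k where "k \<le> card V" "?stop k" by blast
  then have "(LEAST k. ?stop k) \<le> card V"
    using Least_le[of ?stop k] by linarith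
  then show ?thesis
    unfolding buchi_iterations_def by simp
qed

lemma buchi_time_le:
  assumes "finite V" "finite E"
  shows "buchi_time V1 B V E \<le> buchi_iterations V1 B V E * (card V + card E)"
proof -
  have "buchi_time V1 B V E \<le> (\<Sum>k < buchi_iterations V1 B V E. card V + card E)"
    unfolding buchi_time_def
    using assms buchi_graph_subset by (intro sum_mono add_mono card_mono) auto
  then show ?thesis by simp
qed

text \<open>A graph without an empty cut is strongly connected.\<close>
lemma U_set_empty_if_no_empty_cut:
  assumes "\<not> has_empty_cut V E" "B \<subseteq> V" "B \<noteq> {}"
  shows "U_set V E B = {}"
proof -
  let ?R = "(E \<inter> V \<times> V)\<^sup>*"
  have "v \<in> reach_B V E B" if v: "v \<in> V" for v
  proof -
    define R where "R = {u \<in> V. (v, u) \<in> ?R}"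
    have "R = V"
    proof (rule ccontr)
      assume "R \<noteq> V"
      moreover have "v \<in> R" "R \<subseteq> V" using v by (auto simp: R_def)
      ultimately have "R \<in> proper_parts V" by (auto simp: proper_parts_def)
      with assms(1) obtain u w where "u \<in> R" "w \<in> V - R" "(u, w) \<in> E"
        unfolding has_empty_cut_def edge_cut_def by blast
      then show False
        unfolding R_def by (auto intro: rtrancl_into_rtrancl)
    qed
    with assms(2,3) v show ?thesis
      by (auto simp: reach_B_def R_def)
  qed
  then show ?thesis by (auto simp: U_set_def)
qed

lemma buchi_iterations_le_empty_cut:
  assumes "finite V" "B \<subseteq> V" "B \<noteq> {}"
  shows "buchi_iterations V1 B V E \<le> 1 + card V * of_bool (has_empty_cut V E)"
proof (cases "has_empty_cut V E")
  case True
  then show ?thesis using buchi_iterations_le[OF assms(1)] by simp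
next
  case False
  then show ?thesis
    using U_set_empty_if_no_empty_cut[OF False assms(2,3)] by (simp add: buchi_iterations_def)
qed

lemma prod_of_bool_eq:
  "finite A \<Longrightarrow> (\<Prod>x\<in>A. of_bool (P x)) = (of_bool (\<forall>x\<in>A. P x) :: 'b :: comm_semiring_1)"
  by (induction A rule: finite_induct) auto

abbreviation coin_flips :: "'a set \<Rightarrow> real \<Rightarrow> ('a \<Rightarrow> bool) pmf" where
  "coin_flips D p \<equiv> Pi_pmf D False (\<lambda>_. bernoulli_pmf p)"

context
  fixes D :: "'a set" and p :: real
  assumes finite_D: "finite D" and p_nonneg: "0 \<le> p" and p_le_1: "p \<le> 1"
begin

lemma integrable_coin_flips [simp]: "integrable (measure_pmf (coin_flips D p)) (f :: _ \<Rightarrow> real)"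
  using finite_D
  by (intro integrable_measure_pmf_finite) (auto simp: set_Pi_pmf intro!: finite_PiE_dflt)

lemma expectation_prod_coin_flips:
  assumes "\<And>x v. f x v \<ge> (0 :: real)"
  shows "measure_pmf.expectation (coin_flips D p) (\<lambda>y. \<Prod>x\<in>D. f x (y x))
           = (\<Prod>x\<in>D. f x True * p + f x False * (1 - p))"
  using finite_D p_nonneg p_le_1 assms
  by (subst expectation_prod_Pi_pmf) (auto simp: integrable_measure_pmf_finite)

lemma expectation_cylinder:
  assumes "P \<subseteq> D" "K \<subseteq> D" "P \<inter> K = {}"
  shows "measure_pmf.expectation (coin_flips D p) (\<lambda>y. of_bool ((\<forall>x\<in>P. y x) \<and> (\<forall>x\<in>K. \<not> y x)))
           = p ^ card P * (1 - p) ^ card K"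
proof -
  define g where "g x v = (if x \<in> P then of_bool v else if x \<in> K then of_bool (\<not> v) else 1 :: real)"
    for x v
  have rest: "D \<inter> - P \<inter> K = K" using assms by blast
  have "of_bool ((\<forall>x\<in>P. y x) \<and> (\<forall>x\<in>K. \<not> y x)) = (\<Prod>x\<in>D. g x (y x))" for y
  proof -
    have "(\<Prod>x\<in>D. g x (y x)) = (\<Prod>x\<in>P. of_bool (y x)) * (\<Prod>x\<in>K. of_bool (\<not> y x))"
      using finite_D assms
      by (simp add: g_def prod.If_cases Int_absorb1 rest)
    then show ?thesis
      using finite_D assms by (simp add: prod_of_bool_eq finite_subset)
  qed
  then have "measure_pmf.expectation (coin_flips D p) (\<lambda>y. of_bool ((\<forall>x\<in>P. y x) \<and> (\<forall>x\<in>K. \<not> y x)))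
      = (\<Prod>x\<in>D. g x True * p + g x False * (1 - p))"
    by (simp only:) (rule expectation_prod_coin_flips, simp add: g_def)
  also have "\<dots> = (\<Prod>x\<in>D. if x \<in> P then p else if x \<in> K then 1 - p else 1)"
    by (intro prod.cong) (auto simp: g_def)
  also have "\<dots> = (\<Prod>x\<in>P. p) * (\<Prod>x\<in>K. 1 - p)"
    using finite_D assms by (simp add: prod.If_cases Int_absorb1 rest)
  finally show ?thesis by simp
qed

lemma expectation_affine_card_avoiding:
  assumes "K \<subseteq> D"
  shows "measure_pmf.expectation (coin_flips D p)
           (\<lambda>y. (a + b * real (card {e\<in>D. y e})) * of_bool (\<forall>x\<in>K. \<not> y x))
         = (a + b * real (card (D - K)) * p) * (1 - p) ^ card K"
proof -
  let ?avoid = "\<lambda>y. \<forall>x\<in>K. \<not> y x"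
  have split: "(a + b * real (card {e\<in>D. y e})) * of_bool (?avoid y)
      = a * of_bool (?avoid y) + b * (\<Sum>e\<in>D - K. of_bool ((\<forall>x\<in>{e}. y x) \<and> ?avoid y))" for y
  proof (cases "?avoid y")
    case True
    then have "{e\<in>D. y e} = (D - K) \<inter> {e. y e}" by auto
    with True finite_D show ?thesis by simp
  qed (simp add: sum.neutral)
  have "measure_pmf.expectation (coin_flips D p) (\<lambda>y. of_bool ((\<forall>x\<in>{e}. y x) \<and> ?avoid y))
      = p * (1 - p) ^ card K" if "e \<in> D - K" for e
    using expectation_cylinder[of "{e}" K] that assms by simp
  moreover have "measure_pmf.expectation (coin_flips D p) (\<lambda>y. of_bool (?avoid y)) = (1 - p) ^ card K"
    using expectation_cylinder[of "{}" K] assms by simp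
  ultimately show ?thesis
    unfolding split by (simp add: Bochner_Integration.integral_sum algebra_simps)
qed

end

definition expected_empty_cuts :: "nat \<Rightarrow> real \<Rightarrow> real" where
  "expected_empty_cuts n p = (\<Sum>S\<in>proper_parts {..<n}. (1 - p) ^ card (edge_cut {..<n} S))"

lemma finite_offdiag: "finite (offdiag n)"
  by (rule finite_subset[of _ "{..<n} \<times> {..<n}"]) (auto simp: offdiag_def)

lemma finite_proper_parts: "finite V \<Longrightarrow> finite (proper_parts V)"
  by (rule finite_subset[of _ "Pow V"]) (auto simp: proper_parts_def)

lemma edge_cut_subset_offdiag: "S \<in> proper_parts {..<n} \<Longrightarrow> edge_cut {..<n} S \<subseteq> offdiag n"
  by (auto simp: proper_parts_def edge_cut_def offdiag_def)

lemma expectation_random_digraph: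
  "measure_pmf.expectation (random_digraph n p) (f :: _ \<Rightarrow> real)
     = measure_pmf.expectation (coin_flips (offdiag n) p) (\<lambda>y. f {e \<in> offdiag n. y e})"
  by (simp add: random_digraph_def)

lemma set_pmf_random_digraph: "E \<in> set_pmf (random_digraph n p) \<Longrightarrow> E \<subseteq> offdiag n"
  by (auto simp: random_digraph_def)

lemma integrable_random_digraph [simp]:
  "integrable (measure_pmf (random_digraph n p)) (f :: _ \<Rightarrow> real)"
proof (rule integrable_measure_pmf_finite)
  show "finite (set_pmf (random_digraph n p))"
    using set_pmf_random_digraph finite_offdiag by (meson Pow_iff finite_Pow_iff finite_subset subsetI)
qed

context
  fixes n :: nat and p :: real
  assumes p_nonneg: "0 \<le> p" and p_le_1: "p \<le> 1"
begin

lemma expectation_affine_card_edges: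
  "measure_pmf.expectation (random_digraph n p) (\<lambda>E. a + b * real (card E))
     = a + b * real (card (offdiag n)) * p"
  using expectation_affine_card_avoiding[OF finite_offdiag p_nonneg p_le_1, where K = "{}" and a = a and b = b]
  by (simp add: expectation_random_digraph)

text \<open>Union bound over the proper parts S: an empty cut means every edge of some cut is absent.\<close>
lemma expectation_affine_card_empty_cut_le:
  assumes "0 \<le> a" "0 \<le> b"
  shows "measure_pmf.expectation (random_digraph n p)
           (\<lambda>E. (a + b * real (card E)) * of_bool (has_empty_cut {..<n} E))
         \<le> (a + b * real (card (offdiag n)) * p) * expected_empty_cuts n p"
proof -
  let ?D = "offdiag n" and ?P = "proper_parts {..<n}"
  let ?w = "\<lambda>y. a + b * real (card {e \<in> ?D. y e})"
  let ?avoid = "\<lambda>S y. of_bool (\<forall>x\<in>edge_cut {..<n} S. \<not> y x) :: real"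
  have "of_bool (has_empty_cut {..<n} {e \<in> ?D. y e}) \<le> (\<Sum>S\<in>?P. ?avoid S y)" for y
  proof (cases "has_empty_cut {..<n} {e \<in> ?D. y e}")
    case True
    then obtain S where S: "S \<in> ?P" "edge_cut {..<n} S \<inter> {e \<in> ?D. y e} = {}"
      by (auto simp: has_empty_cut_def)
    then have "?avoid S y = 1" using edge_cut_subset_offdiag by fastforce
    moreover have "?avoid S y \<le> (\<Sum>S\<in>?P. ?avoid S y)"
      using S(1) by (intro member_le_sum) (auto simp: finite_proper_parts)
    ultimately show ?thesis using True by simp
  qed (simp add: sum_nonneg)
  then have "measure_pmf.expectation (coin_flips ?D p)
        (\<lambda>y. ?w y * of_bool (has_empty_cut {..<n} {e \<in> ?D. y e}))
      \<le> measure_pmf.expectation (coin_flips ?D p) (\<lambda>y. \<Sum>S\<in>?P. ?w y * ?avoid S y)"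
    using assms
    by (intro integral_mono) (simp_all add: finite_offdiag p_nonneg p_le_1 mult_left_mono flip: sum_distrib_left)
  also have "\<dots> = (\<Sum>S\<in>?P. (a + b * real (card (?D - edge_cut {..<n} S)) * p) * (1 - p) ^ card (edge_cut {..<n} S))"
    by (simp add: Bochner_Integration.integral_sum finite_offdiag p_nonneg p_le_1
        expectation_affine_card_avoiding edge_cut_subset_offdiag)
  also have "\<dots> \<le> (\<Sum>S\<in>?P. (a + b * real (card ?D) * p) * (1 - p) ^ card (edge_cut {..<n} S))"
    using assms p_nonneg p_le_1 finite_offdiag
    by (intro sum_mono mult_right_mono add_left_mono mult_left_mono) (auto intro: card_mono)
  finally show ?thesis
    by (simp add: expectation_random_digraph expected_empty_cuts_def sum_distrib_left)
qed

lemma expectation_affine_card_buchi_iterations_le: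
  assumes "0 \<le> a" "0 \<le> b" "B \<subseteq> {..<n}" "B \<noteq> {}"
  shows "measure_pmf.expectation (random_digraph n p)
           (\<lambda>E. (a + b * real (card E)) * real (buchi_iterations V1 B {..<n} E))
         \<le> (1 + n * expected_empty_cuts n p)
             * measure_pmf.expectation (random_digraph n p) (\<lambda>E. a + b * real (card E))"
proof -
  let ?w = "\<lambda>E. a + b * real (card E)" and ?cut = "\<lambda>E. of_bool (has_empty_cut {..<n} E) :: real"
  have "?w E * real (buchi_iterations V1 B {..<n} E) \<le> ?w E * (1 + n * ?cut E)" for E
    using assms buchi_iterations_le_empty_cut[of "{..<n}" B V1 E]
    by (intro mult_left_mono) (auto simp flip: of_nat_le_iff)
  then have "measure_pmf.expectation (random_digraph n p) (\<lambda>E. ?w E * real (buchi_iterations V1 B {..<n} E))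
      \<le> measure_pmf.expectation (random_digraph n p) (\<lambda>E. ?w E + n * (?w E * ?cut E))"
    by (intro integral_mono) (simp_all add: algebra_simps)
  also have "\<dots> = measure_pmf.expectation (random_digraph n p) ?w
        + n * measure_pmf.expectation (random_digraph n p) (\<lambda>E. ?w E * ?cut E)"
    by simp
  also have "\<dots> \<le> measure_pmf.expectation (random_digraph n p) ?w
        + n * ((a + b * real (card (offdiag n)) * p) * expected_empty_cuts n p)"
    using expectation_affine_card_empty_cut_le[OF assms(1,2)] by (intro add_left_mono mult_left_mono) auto
  finally show ?thesis
    by (simp add: expectation_affine_card_edges algebra_simps)
qed

lemma expectation_buchi_iterations_le:
  assumes "B \<subseteq> {..<n}" "B \<noteq> {}"
  shows "measure_pmf.expectation (random_digraph n p) (\<lambda>E. real (buchi_iterations V1 B {..<n} E))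
         \<le> 1 + n * expected_empty_cuts n p"
  using expectation_affine_card_buchi_iterations_le[where a = 1 and b = 0, OF _ _ assms] by simp

lemma expectation_buchi_time_le:
  assumes "B \<subseteq> {..<n}" "B \<noteq> {}"
  shows "measure_pmf.expectation (random_digraph n p) (\<lambda>E. real (buchi_time V1 B {..<n} E))
         \<le> (1 + n * expected_empty_cuts n p)
             * measure_pmf.expectation (random_digraph n p) (\<lambda>E. real (n + card E))"
proof -
  have "real (buchi_time V1 B {..<n} E) \<le> (n + 1 * real (card E)) * real (buchi_iterations V1 B {..<n} E)"
    if "E \<in> set_pmf (random_digraph n p)" for E
  proof -
    have "finite E"
      using set_pmf_random_digraph[OF that] finite_offdiag by (rule finite_subset)
    then have "buchi_time V1 B {..<n} E \<le> (n + card E) * buchi_iterations V1 B {..<n} E"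
      using buchi_time_le[of "{..<n}" E V1 B] by (simp add: mult.commute)
    then show ?thesis by (metis mult_1 of_nat_add of_nat_le_iff of_nat_mult)
  qed
  then have "measure_pmf.expectation (random_digraph n p) (\<lambda>E. real (buchi_time V1 B {..<n} E))
      \<le> measure_pmf.expectation (random_digraph n p)
           (\<lambda>E. (n + 1 * real (card E)) * real (buchi_iterations V1 B {..<n} E))"
    by (intro integral_mono_AE) (auto simp: AE_measure_pmf_iff)
  also have "\<dots> \<le> (1 + n * expected_empty_cuts n p)
      * measure_pmf.expectation (random_digraph n p) (\<lambda>E. n + 1 * real (card E))"
    using assms by (intro expectation_affine_card_buchi_iterations_le) auto
  finally show ?thesis by simp
qed

end

lemma card_edge_cut:
  "finite V \<Longrightarrow> S \<subseteq> V \<Longrightarrow> card (edge_cut V S) = card S * (card V - card S)"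
  by (simp add: edge_cut_def card_cartesian_product card_Diff_subset finite_subset)

lemma card_proper_part:
  assumes "finite V" "S \<in> proper_parts V"
  shows "card S \<in> {1..card V - 1}"
proof -
  have S: "S \<subseteq> V" "S \<noteq> {}" "S \<noteq> V" using assms(2) by (auto simp: proper_parts_def)
  then have "card S < card V" using assms(1) by (intro psubset_card_mono) auto
  moreover have "card S \<noteq> 0" using S assms(1) by (meson card_0_eq finite_subset)
  ultimately show ?thesis by auto
qed

lemma expected_empty_cuts_binomial:
  "expected_empty_cuts n p = (\<Sum>k\<in>{1..n-1}. real (n choose k) * (1 - p) ^ (k * (n - k)))"
proof -
  let ?P = "proper_parts {..<n}"
  have "expected_empty_cuts n p = (\<Sum>S\<in>?P. (1 - p) ^ (card S * (n - card S)))"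
    unfolding expected_empty_cuts_def by (intro sum.cong) (auto simp: proper_parts_def card_edge_cut)
  also have "\<dots> = (\<Sum>k\<in>{1..n-1}. \<Sum>S\<in>{S \<in> ?P. card S = k}. (1 - p) ^ (card S * (n - card S)))"
    using card_proper_part[of "{..<n}"]
    by (intro sum.group[symmetric]) (auto simp: finite_proper_parts)
  also have "\<dots> = (\<Sum>k\<in>{1..n-1}. real (n choose k) * (1 - p) ^ (k * (n - k)))"
  proof (rule sum.cong[OF refl])
    fix k assume "k \<in> {1..n-1}"
    then have "{S \<in> ?P. card S = k} = {S. S \<subseteq> {..<n} \<and> card S = k}"
      by (auto simp: proper_parts_def)
    then show "(\<Sum>S\<in>{S \<in> ?P. card S = k}. (1 - p) ^ (card S * (n - card S)))
        = real (n choose k) * (1 - p) ^ (k * (n - k))"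
      using n_subsets[of "{..<n}" k] by simp
  qed
  finally show ?thesis .
qed

lemma expected_empty_cuts_le_power:
  assumes "0 \<le> p" "p \<le> 1"
  shows "expected_empty_cuts n p \<le> 2 ^ n"
proof -
  have "expected_empty_cuts n p \<le> real (card (proper_parts {..<n}))"
    unfolding expected_empty_cuts_def using sum_mono[of _ _ "\<lambda>_. 1"] assms
    by (smt (verit) power_le_one real_of_card)
  also have "card (proper_parts {..<n}) \<le> card (Pow {..<n::nat})"
    by (intro card_mono) (auto simp: proper_parts_def)
  finally show ?thesis by (simp add: card_Pow)
qed

lemma cut_exponent_le:
  fixes c n m :: real
  assumes c: "c > 2" and m: "1 \<le> m" "2 * m \<le> n" and n: "16 * c / (c - 2)^2 \<le> n"
  shows "1 + m + (c - 2) / 4 * m \<le> c * m * (n - m) / n"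
proof -
  have n_pos: "n > 0" using m by linarith
  have "n + m * n + (c - 2) / 4 * m * n + c * m^2 \<le> c * m * n"
  proof (cases "4 * c * m \<le> (c - 2) * n")
    case True
    have "c * m^2 = m * (c * m)" by (simp add: power2_eq_square)
    also have "\<dots> \<le> m * ((c - 2) * n / 4)" using True m by (intro mult_left_mono) auto
    finally have "c * m^2 \<le> (c - 2) / 4 * m * n" by (simp add: algebra_simps)
    moreover have "n \<le> m * n" "m * n \<le> c / 2 * (m * n)" using m n_pos c by auto
    ultimately show ?thesis by argo
  next
    case False
    have "16 * c \<le> (c - 2)^2 * n"
      using n c by (simp add: pos_divide_le_eq mult.commute)
    also have "\<dots> = (c - 2) * ((c - 2) * n)" by (simp add: power2_eq_square)
    also have "\<dots> < (c - 2) * (4 * c * m)" using False c by (intro mult_strict_left_mono) auto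
    finally have "16 * c < 4 * c * ((c - 2) * m)" by (simp add: algebra_simps)
    then have "4 < (c - 2) * m" using c by (simp add: mult.commute)
    then have "n \<le> (c - 2) / 4 * m * n" using n_pos by simp
    moreover have "c * m^2 \<le> c * m * (n / 2)"
      using m c by (simp add: power2_eq_square mult_left_mono)
    ultimately show ?thesis by argo
  qed
  then show ?thesis using n_pos by (simp add: field_simps power2_eq_square)
qed

lemma binomial_cut_term_le:
  fixes c p :: real and n m :: nat
  assumes c: "c > 2" and m: "1 \<le> m" "2 * m \<le> n" and n: "16 * c / (c - 2)^2 \<le> real n"
    and p: "c * ln (real n) / real n \<le> p" "p \<le> 1"
  shows "real n * real (n choose m) * (1 - p) ^ (m * (n - m)) \<le> exp (- (c - 2) / 4 * ln (real n)) ^ m"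
proof -
  have n_ge: "real n \<ge> 2" and "m \<le> n" using m by linarith+
  then have cut: "real (m * (n - m)) = real m * (real n - real m)" by (simp add: of_nat_diff)
  have "(1 + real m + (c - 2) / 4 * real m) * ln (real n) \<le> c * m * (n - m) / n * ln (real n)"
    using cut_exponent_le[of c m n] c m n n_ge by (intro mult_right_mono) auto
  also have "\<dots> = c * ln (real n) / real n * real (m * (n - m))" by (simp add: cut)
  also have "\<dots> \<le> p * real (m * (n - m))" using p(1) by (intro mult_right_mono) auto
  finally have exponent: "(real m + 1) * ln (real n) - p * real (m * (n - m))
      \<le> real m * (- (c - 2) / 4 * ln (real n))" by argo
  have "real n * real (n choose m) \<le> real n * real n ^ m"
    using binomial_le_pow[OF \<open>m \<le> n\<close>] by (intro mult_left_mono) (simp_all flip: of_nat_power)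
  also have "\<dots> = exp (ln (real n)) ^ Suc m"
    using n_ge by simp
  also have "\<dots> = exp ((real m + 1) * ln (real n))"
    unfolding exp_of_nat_mult[symmetric] by (simp add: algebra_simps)
  finally have binomial: "real n * real (n choose m) \<le> exp ((real m + 1) * ln (real n))" .
  have "p \<ge> 0" using p(1) c n_ge by (smt (verit) divide_nonneg_nonneg ln_ge_zero mult_nonneg_nonneg)
  then have "(1 - p) ^ (m * (n - m)) \<le> exp (- p) ^ (m * (n - m))"
    using exp_ge_add_one_self[of "- p"] p(2) by (intro power_mono) auto
  also have "\<dots> = exp (- (p * real (m * (n - m))))" by (simp add: exp_of_nat_mult[symmetric] mult.commute)
  finally have "real n * real (n choose m) * (1 - p) ^ (m * (n - m))
      \<le> exp ((real m + 1) * ln (real n)) * exp (- (p * real (m * (n - m))))"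
    using binomial p(2) by (intro mult_mono) auto
  also have "\<dots> \<le> exp (real m * (- (c - 2) / 4 * ln (real n)))"
    using exponent by (simp flip: exp_add)
  also have "\<dots> = exp (- (c - 2) / 4 * ln (real n)) ^ m"
    by (rule exp_of_nat_mult)
  finally show ?thesis .
qed

lemma binomial_cut_term_le_symmetric:
  fixes c p :: real and n k :: nat
  assumes c: "c > 2" and n: "16 * c / (c - 2)^2 \<le> real n" and k: "k \<in> {1..n-1}"
    and p: "c * ln (real n) / real n \<le> p" "p \<le> 1"
  defines "r \<equiv> exp (- (c - 2) / 4 * ln (real n))"
  shows "real n * (real (n choose k) * (1 - p) ^ (k * (n - k))) \<le> r ^ k + r ^ (n - k)"
proof -
  have r_pos: "0 < r" by (simp add: r_def)
  have small: "real n * (real (n choose m) * (1 - p) ^ (m * (n - m))) \<le> r ^ m"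
    if "1 \<le> m" "2 * m \<le> n" for m
    using binomial_cut_term_le[of c m n p] that c n p by (simp add: r_def mult.assoc)
  show ?thesis
  proof (cases "2 * k \<le> n")
    case True
    then show ?thesis using small[of k] k r_pos by (smt (verit) atLeastAtMost_iff zero_le_power)
  next
    case False
    then have "real n * (real (n choose (n - k)) * (1 - p) ^ ((n - k) * (n - (n - k)))) \<le> r ^ (n - k)"
      using k by (intro small) auto
    moreover have "n choose (n - k) = n choose k" "(n - k) * (n - (n - k)) = k * (n - k)"
      using k by (auto simp: binomial_symmetric[symmetric])
    ultimately show ?thesis using r_pos by (smt (verit) zero_le_power)
  qed
qed

lemma sum_power_atLeastAtMost_le:
  fixes r :: real
  assumes "0 \<le> r" "r < 1"
  shows "(\<Sum>k\<in>{1..m}. r ^ k) \<le> 1 / (1 - r)"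
proof -
  have "(\<Sum>k\<in>{1..m}. r ^ k) \<le> (\<Sum>k<Suc m. r ^ k)"
    using assms by (intro sum_mono2) auto
  also have "\<dots> = (1 - r ^ Suc m) / (1 - r)" using sum_gp_strict[of r "Suc m"] assms by (simp only:) simp
  also have "\<dots> \<le> 1 / (1 - r)" using assms by (intro divide_right_mono) auto
  finally show ?thesis .
qed

lemma n_expected_empty_cuts_le:
  fixes c p :: real and n :: nat
  assumes c: "c > 2" and n: "16 * c / (c - 2)^2 \<le> real n" "2 \<le> n"
    and p: "c * ln (real n) / real n \<le> p" "p \<le> 1"
  shows "real n * expected_empty_cuts n p \<le> 2 / (1 - exp (- (c - 2) / 4 * ln 2))"
proof -
  define r where "r = exp (- (c - 2) / 4 * ln (real n))"
  define r0 where "r0 = exp (- (c - 2) / 4 * ln 2)"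
  have "- (c - 2) / 4 * ln (real n) \<le> - (c - 2) / 4 * ln 2"
    using c n(2) by (intro mult_left_mono_neg) auto
  then have r_le: "r \<le> r0" unfolding r_def r0_def by simp
  have r_nonneg: "0 \<le> r" by (simp add: r_def)
  have "- (c - 2) / 4 * ln 2 < 0" using c by (simp add: mult_neg_pos)
  then have r0_less: "r0 < 1" unfolding r0_def by simp
  have mirror: "(\<Sum>k\<in>{1..n-1}. r ^ (n - k)) = (\<Sum>k\<in>{1..n-1}. r ^ k)"
    by (rule sum.reindex_bij_witness[where i = "\<lambda>k. n - k" and j = "\<lambda>k. n - k"]) auto
  have "real n * expected_empty_cuts n p
      = (\<Sum>k\<in>{1..n-1}. real n * (real (n choose k) * (1 - p) ^ (k * (n - k))))"
    by (simp add: expected_empty_cuts_binomial sum_distrib_left)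
  also have "\<dots> \<le> (\<Sum>k\<in>{1..n-1}. r ^ k) + (\<Sum>k\<in>{1..n-1}. r ^ (n - k))"
    unfolding sum.distrib[symmetric] r_def using c n p
    by (intro sum_mono binomial_cut_term_le_symmetric) auto
  also have "\<dots> \<le> 2 / (1 - r)"
  proof -
    have "(\<Sum>k\<in>{1..n-1}. r ^ k) \<le> 1 / (1 - r)"
      using r_nonneg r_le r0_less by (intro sum_power_atLeastAtMost_le) auto
    then show ?thesis unfolding mirror by simp
  qed
  also have "\<dots> \<le> 2 / (1 - r0)" using r_le r0_less by (intro divide_left_mono) auto
  finally show ?thesis unfolding r0_def .
qed

lemma threshold_nonneg: "0 \<le> c \<Longrightarrow> 0 \<le> c * ln (real n) / real n"
  by (cases n) auto

lemma n_expected_empty_cuts_bounded: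
  fixes c :: real
  assumes c: "c > 2"
  obtains K where "\<And>n p. c * ln (real n) / real n \<le> p \<Longrightarrow> p \<le> 1 \<Longrightarrow> real n * expected_empty_cuts n p \<le> K"
proof
  define N :: nat where "N = nat \<lceil>16 * c / (c - 2)^2\<rceil> + 2"
  fix n p
  assume p: "c * ln (real n) / real n \<le> p" "p \<le> 1"
  show "real n * expected_empty_cuts n p \<le> max (real N * 2 ^ N) (2 / (1 - exp (- (c - 2) / 4 * ln 2)))"
  proof (cases "n < N")
    case True
    have "expected_empty_cuts n p \<le> 2 ^ n"
      using p threshold_nonneg[of c n] c by (intro expected_empty_cuts_le_power) auto
    also have "(2 :: real) ^ n \<le> 2 ^ N" using True by (intro power_increasing) auto
    finally have "expected_empty_cuts n p \<le> 2 ^ N" .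
    moreover have "0 \<le> expected_empty_cuts n p"
      using p(2) by (simp add: expected_empty_cuts_def sum_nonneg)
    ultimately have "real n * expected_empty_cuts n p \<le> real N * 2 ^ N"
      using True by (intro mult_mono) auto
    then show ?thesis by linarith
  next
    case False
    then have "16 * c / (c - 2)^2 \<le> real n" "2 \<le> n" unfolding N_def by linarith+
    then show ?thesis using n_expected_empty_cuts_le[OF c _ _ p] by fastforce
  qed
qed

theorem theorem2:
  fixes c :: real
  assumes "c > 2"
  shows "\<exists>C :: real. \<forall>(n :: nat) (p :: real) (V1 :: nat set) (B :: nat set).
     c * ln (real n) / real n \<le> p \<and> p \<le> 1 \<and> V1 \<subseteq> {..<n} \<and> B \<subseteq> {..<n} \<and> B \<noteq> {} \<longrightarrow>
       measure_pmf.expectation (random_digraph n p)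
          (\<lambda>E. real (buchi_iterations V1 B {..<n} E)) \<le> C
     \<and> measure_pmf.expectation (random_digraph n p)
          (\<lambda>E. real (buchi_time V1 B {..<n} E))
         \<le> C * measure_pmf.expectation (random_digraph n p) (\<lambda>E. real (n + card E))"
proof -
  obtain K where K: "\<And>n p. c * ln (real n) / real n \<le> p \<Longrightarrow> p \<le> 1 \<Longrightarrow> real n * expected_empty_cuts n p \<le> K"
    using n_expected_empty_cuts_bounded[OF assms] by blast
  show ?thesis
  proof (intro exI[of _ "1 + K"] allI impI conjI)
    fix n p V1 B
    assume "c * ln (real n) / real n \<le> p \<and> p \<le> 1 \<and> V1 \<subseteq> {..<n} \<and> B \<subseteq> {..<n} \<and> B \<noteq> {}"
    then have p: "c * ln (real n) / real n \<le> p" "p \<le> 1" and B: "B \<subseteq> {..<n}" "B \<noteq> {}" by auto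
    then have "0 \<le> p" using threshold_nonneg[of c n] assms by linarith
    have factor: "1 + n * expected_empty_cuts n p \<le> 1 + K" using K[OF p] by simp
    show "measure_pmf.expectation (random_digraph n p) (\<lambda>E. real (buchi_iterations V1 B {..<n} E)) \<le> 1 + K"
      using expectation_buchi_iterations_le[OF \<open>0 \<le> p\<close> p(2) B, of V1] factor by linarith
    have "0 \<le> measure_pmf.expectation (random_digraph n p) (\<lambda>E. real (n + card E))" by simp
    then show "measure_pmf.expectation (random_digraph n p) (\<lambda>E. real (buchi_time V1 B {..<n} E))
        \<le> (1 + K) * measure_pmf.expectation (random_digraph n p) (\<lambda>E. real (n + card E))"
      using expectation_buchi_time_le[OF \<open>0 \<le> p\<close> p(2) B] factor
      by (meson mult_right_mono order_trans)
  qed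
qed

end
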